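(* Let $L>0$ be an integer, $m\ge1$, and for each $i\in\{1,\dots,m\}$ let $J_i>0$ and positive real constants $a_i,b_i,c_i,d_i$ be fixed. For a total arrival rate $\lambda>0$ and fractions $p_i>0$ with $\sum_ip_i=1$, define for variables $k_i>0$, $r_i\ge1$: $U_i = a_i k_i r_i + b_i J_i r_i + c_i k_i + d_i J_i$, $\Lambda=\lambda\sum_i p_iU_i$, $D_q=\frac{\Lambda^2}{\lambda L(L-\Lambda)}$, $D_{s,i}= a_i+\frac{b_iJ_i}{k_i}+\big(c_i+\frac{d_iJ_i}{k_i}\big)\ln\frac{r_i}{r_i-1}$, and consider the problem of minimizing $D_q+\sum_ip_iD_{s,i}$ subject to $k_i>0$, $r_i\ge1$, $\Lambda<L$, whose optimal solution is unique. Let $n_i=k_ir_i$ and let $Q=\frac{\Lambda^2}{L(L-\Lambda)}$ (the approximate expected request-queue length) evaluated at the optimal solution. Then there exist strictly decreasing functions $N_i,K_i,R_i$ (depending only on $L$, $J_i$ and the constants $a_i,b_i,c_i,d_i$) such that, for every choice of $\lambda$ and $\{p_i\}$, the optimal values satisfy $$n_i=N_i(Q),\qquad k_i=K_i(Q),\qquad r_i=R_i(Q).$$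
   Context: Model: a request of class $i$ (file size $J_i$) is served with an $(n_i,k_i)$ MDS code with redundancy ratio $r_i=n_i/k_i$, relaxed to real values; $a_i+b_iB$ is the minimum task delay and $c_i+d_iB$ the mean of the exponential tail of task delay for chunk size $B$; $L$ is the number of parallel threads; $D_q$ and $D_{s,i}$ are the approximated queueing and service delays. *)

theory Defs
  imports Complex_Main
begin

definition U :: "(nat \<Rightarrow> real) \<Rightarrow> (nat \<Rightarrow> real) \<Rightarrow> (nat \<Rightarrow> real) \<Rightarrow> (nat \<Rightarrow> real)
   \<Rightarrow> (nat \<Rightarrow> real) \<Rightarrow> (nat \<Rightarrow> real) \<Rightarrow> (nat \<Rightarrow> real) \<Rightarrow> nat \<Rightarrow> real" where
  "U J a b c d k r i = a i * k i * r i + b i * J i * r i + c i * k i + d i * J i"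

definition Lam :: "nat \<Rightarrow> real \<Rightarrow> (nat \<Rightarrow> real) \<Rightarrow> (nat \<Rightarrow> real) \<Rightarrow> (nat \<Rightarrow> real) \<Rightarrow> (nat \<Rightarrow> real)
   \<Rightarrow> (nat \<Rightarrow> real) \<Rightarrow> (nat \<Rightarrow> real) \<Rightarrow> (nat \<Rightarrow> real) \<Rightarrow> (nat \<Rightarrow> real) \<Rightarrow> real" where
  "Lam m lam p J a b c d k r = lam * (\<Sum>i<m. p i * U J a b c d k r i)"

definition Dq :: "nat \<Rightarrow> real \<Rightarrow> real \<Rightarrow> real" where
  "Dq L lam \<Lambda> = \<Lambda>\<^sup>2 / (lam * real L * (real L - \<Lambda>))"

definition Ds :: "(nat \<Rightarrow> real) \<Rightarrow> (nat \<Rightarrow> real) \<Rightarrow> (nat \<Rightarrow> real) \<Rightarrow> (nat \<Rightarrow> real)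
   \<Rightarrow> (nat \<Rightarrow> real) \<Rightarrow> (nat \<Rightarrow> real) \<Rightarrow> (nat \<Rightarrow> real) \<Rightarrow> nat \<Rightarrow> real" where
  "Ds J a b c d k r i = a i + b i * J i / k i + (c i + d i * J i / k i) * ln (r i / (r i - 1))"

definition objective :: "nat \<Rightarrow> nat \<Rightarrow> real \<Rightarrow> (nat \<Rightarrow> real) \<Rightarrow> (nat \<Rightarrow> real) \<Rightarrow> (nat \<Rightarrow> real)
   \<Rightarrow> (nat \<Rightarrow> real) \<Rightarrow> (nat \<Rightarrow> real) \<Rightarrow> (nat \<Rightarrow> real) \<Rightarrow> (nat \<Rightarrow> real) \<Rightarrow> (nat \<Rightarrow> real) \<Rightarrow> real" where
  "objective m L lam p J a b c d k r =
     Dq L lam (Lam m lam p J a b c d k r) + (\<Sum>i<m. p i * Ds J a b c d k r i)"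

text \<open>Feasible set. The constraint r i \<ge> 1 is taken as r i > 1: at r i = 1 the
  service delay is +\<infinity> (ln(r/(r-1)) diverges), so such points are never optimal.\<close>
definition feasible :: "nat \<Rightarrow> nat \<Rightarrow> real \<Rightarrow> (nat \<Rightarrow> real) \<Rightarrow> (nat \<Rightarrow> real) \<Rightarrow> (nat \<Rightarrow> real)
   \<Rightarrow> (nat \<Rightarrow> real) \<Rightarrow> (nat \<Rightarrow> real) \<Rightarrow> (nat \<Rightarrow> real) \<Rightarrow> (nat \<Rightarrow> real) \<Rightarrow> (nat \<Rightarrow> real) \<Rightarrow> bool" where
  "feasible m L lam p J a b c d k r \<longleftrightarrow>
     (\<forall>i<m. k i > 0 \<and> r i > 1) \<and> Lam m lam p J a b c d k r < real L"

definition optimal :: "nat \<Rightarrow> nat \<Rightarrow> real \<Rightarrow> (nat \<Rightarrow> real) \<Rightarrow> (nat \<Rightarrow> real) \<Rightarrow> (nat \<Rightarrow> real)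
   \<Rightarrow> (nat \<Rightarrow> real) \<Rightarrow> (nat \<Rightarrow> real) \<Rightarrow> (nat \<Rightarrow> real) \<Rightarrow> (nat \<Rightarrow> real) \<Rightarrow> (nat \<Rightarrow> real) \<Rightarrow> bool" where
  "optimal m L lam p J a b c d k r \<longleftrightarrow>
     feasible m L lam p J a b c d k r \<and>
     (\<forall>k' r'. feasible m L lam p J a b c d k' r' \<longrightarrow>
        objective m L lam p J a b c d k r \<le> objective m L lam p J a b c d k' r')"

definition strictly_decreasing_pos :: "(real \<Rightarrow> real) \<Rightarrow> bool" where
  "strictly_decreasing_pos F \<longleftrightarrow> (\<forall>x y. 0 < x \<longrightarrow> x < y \<longrightarrow> F y < F x)"

end

theory Submission
  imports Defs
begin

text \<open>At an optimum each \<open>k i\<close> and \<open>r i\<close> is an interior critical point of the objective. With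
  \<open>t = Q'(\<Lambda>)\<close>, the derivative of the queue length \<open>Q(\<Lambda>) = \<Lambda>\<^sup>2 / (L (L - \<Lambda>))\<close>, the two
  first-order conditions of a class read
  \<open>(a r + c) t = J (b + d ln (r / (r - 1))) / k\<^sup>2\<close> and \<open>(a k + b J) t = (c + d J / k) / (r (r - 1))\<close>.
  Eliminating \<open>t\<close> expresses \<open>k\<close> as a strictly increasing function of \<open>r\<close> alone, and then \<open>t\<close> as a
  strictly decreasing function of \<open>r\<close>, both depending only on the class constants. As \<open>Q\<close> determines
  \<open>\<Lambda>\<close> and hence \<open>t\<close> increasingly, \<open>r\<close>, \<open>k\<close> and \<open>n = k r\<close> are strictly decreasing functions of \<open>Q\<close>.
  Neither uniqueness of the optimum nor \<open>\<Sum>i. p i = 1\<close> is needed.\<close>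

lemma monotone_on_cancel_strict_mono:
  fixes f :: "'a::linorder \<Rightarrow> 'b::linorder"
  assumes f: "strict_mono_on S f" and g: "g ` T \<subseteq> S"
    and fg: "monotone_on T ord (<) (\<lambda>y. f (g y))"
  shows "monotone_on T ord (<) g"
  unfolding monotone_on_def
proof (intro ballI impI)
  fix x y assume xy: "x \<in> T" "y \<in> T" "ord x y"
  then have "f (g x) < f (g y)" using fg by (simp add: monotone_on_def)
  then show "g x < g y"
    using strict_mono_on_leD[OF f] g xy by (meson image_subset_iff not_le)
qed

lemma strictly_decreasing_pos_iff: "strictly_decreasing_pos F \<longleftrightarrow> strict_antimono_on {0<..} F"
  unfolding strictly_decreasing_pos_def monotone_on_def by auto

lemma strict_antimono_on_mult:
  fixes f g :: "'a::order \<Rightarrow> real"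
  assumes "strict_antimono_on S f" "strict_antimono_on S g"
    and "\<And>x. x \<in> S \<Longrightarrow> 0 < f x" "\<And>x. x \<in> S \<Longrightarrow> 0 < g x"
  shows "strict_antimono_on S (\<lambda>x. f x * g x)"
  using assms unfolding monotone_on_def by (auto intro!: mult_strict_mono less_imp_le)

lemma DERIV_interior_min_eq_0:
  fixes f :: "real \<Rightarrow> real"
  assumes "(f has_real_derivative l) (at x)" "lo < x" "x < hi"
    and "\<And>y. lo < y \<Longrightarrow> y < hi \<Longrightarrow> f x \<le> f y"
  shows "l = 0"
proof (rule DERIV_local_min[OF assms(1)])
  show "0 < min (x - lo) (hi - x)" using assms(2,3) by simp
  show "\<forall>y. \<bar>x - y\<bar> < min (x - lo) (hi - x) \<longrightarrow> f x \<le> f y"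
    using assms(4) by auto
qed

lemma ln_ratio_ge:
  fixes r :: real
  assumes "1 < r"
  shows "1 / r \<le> ln (r / (r - 1))"
  using ln_diff_le[of "r - 1" r] assms by (simp add: ln_div diff_divide_distrib)

definition queue_len :: "real \<Rightarrow> real \<Rightarrow> real" where
  "queue_len Lr x = x\<^sup>2 / (Lr * (Lr - x))"

definition queue_slope :: "real \<Rightarrow> real \<Rightarrow> real" where
  "queue_slope Lr x = Lr / (Lr - x)\<^sup>2 - 1 / Lr"

definition load_of_queue :: "real \<Rightarrow> real \<Rightarrow> real" where
  "load_of_queue Lr q = Lr * (sqrt (q\<^sup>2 + 4 * q) - q) / 2"

definition slope_of_queue :: "real \<Rightarrow> real \<Rightarrow> real" where
  "slope_of_queue Lr q = queue_slope Lr (load_of_queue Lr q)"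

lemma queue_len_deriv:
  assumes "0 < Lr" "x < Lr"
  shows "(queue_len Lr has_real_derivative queue_slope Lr x) (at x)"
proof -
  have nz: "Lr \<noteq> 0" "Lr - x \<noteq> 0" using assms by auto
  have "((\<lambda>x. x\<^sup>2 / (Lr * (Lr - x))) has_real_derivative
      (2 * x * (Lr * (Lr - x)) + x\<^sup>2 * Lr) / (Lr * (Lr - x))\<^sup>2) (at x)"
    by (rule derivative_eq_intros refl | (use nz in \<open>simp; fail\<close>))+
      (use nz in \<open>simp add: divide_simps power2_eq_square\<close>)
  moreover have "(2 * x * (Lr * (Lr - x)) + x\<^sup>2 * Lr) / (Lr * (Lr - x))\<^sup>2 = queue_slope Lr x"
  proof -
    have "2 * x * (Lr * (Lr - x)) + x\<^sup>2 * Lr = Lr * (Lr\<^sup>2 - (Lr - x)\<^sup>2)"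
      by (simp add: power2_eq_square algebra_simps)
    then have "(2 * x * (Lr * (Lr - x)) + x\<^sup>2 * Lr) / (Lr * (Lr - x))\<^sup>2
        = (Lr\<^sup>2 - (Lr - x)\<^sup>2) / (Lr * (Lr - x)\<^sup>2)"
      using nz by (simp add: power_mult_distrib power2_eq_square)
    also have "\<dots> = queue_slope Lr x"
      unfolding queue_slope_def using nz by (simp add: diff_divide_distrib power2_eq_square)
    finally show ?thesis .
  qed
  ultimately show ?thesis unfolding queue_len_def by simp
qed

lemma queue_len_strict_mono: "0 < Lr \<Longrightarrow> strict_mono_on {0..<Lr} (queue_len Lr)"
proof (rule strict_mono_onI)
  fix x y assume Lr: "0 < Lr" and xy: "x \<in> {0..<Lr}" "y \<in> {0..<Lr}" "x < y"
  have "x\<^sup>2 < y\<^sup>2" using xy by (simp add: power_strict_mono)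
  moreover have "Lr * (Lr - y) < Lr * (Lr - x)" "0 < Lr * (Lr - y)" using Lr xy by simp_all
  ultimately show "queue_len Lr x < queue_len Lr y"
    unfolding queue_len_def by (intro frac_less) auto
qed

lemma load_of_queue_bounds:
  assumes "0 < Lr" "0 < q"
  shows "0 < load_of_queue Lr q" "load_of_queue Lr q < Lr"
proof -
  have "sqrt (q\<^sup>2) < sqrt (q\<^sup>2 + 4 * q)" using assms by (intro real_sqrt_less_mono) simp
  moreover have "sqrt (q\<^sup>2 + 4 * q) < sqrt ((q + 2)\<^sup>2)"
    using assms by (intro real_sqrt_less_mono) (simp add: power2_eq_square algebra_simps)
  ultimately have "q < sqrt (q\<^sup>2 + 4 * q)" "sqrt (q\<^sup>2 + 4 * q) < q + 2" using assms by simp_all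
  then show "0 < load_of_queue Lr q" "load_of_queue Lr q < Lr"
    unfolding load_of_queue_def using assms by simp_all
qed

text \<open>\<open>load_of_queue Lr q\<close> is the positive root of \<open>x\<^sup>2 + q Lr x - q Lr\<^sup>2 = 0\<close>.\<close>
lemma queue_len_load_of_queue:
  assumes Lr: "0 < Lr" and q: "0 < q"
  shows "queue_len Lr (load_of_queue Lr q) = q"
proof -
  define S where "S = sqrt (q\<^sup>2 + 4 * q)"
  have S2: "S\<^sup>2 = q\<^sup>2 + 4 * q" unfolding S_def using q by simp
  have "(Lr * (S - q) / 2)\<^sup>2 = Lr\<^sup>2 * (S\<^sup>2 - 2 * q * S + q\<^sup>2) / 4"
    by (simp add: power2_eq_square algebra_simps)
  also have "\<dots> = q * Lr * (Lr - Lr * (S - q) / 2)"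
    unfolding S2 by (simp add: power2_eq_square field_simps)
  finally show ?thesis
    using load_of_queue_bounds[OF Lr q] Lr
    unfolding queue_len_def load_of_queue_def S_def[symmetric] by (simp add: divide_simps)
qed

lemma load_of_queue_queue_len:
  assumes "0 < Lr" "0 < x" "x < Lr"
  shows "load_of_queue Lr (queue_len Lr x) = x"
proof -
  have q: "0 < queue_len Lr x" unfolding queue_len_def using assms by simp
  have "queue_len Lr (load_of_queue Lr (queue_len Lr x)) = queue_len Lr x"
    using queue_len_load_of_queue[OF assms(1) q] .
  then show ?thesis
    using strict_mono_on_eqD[OF queue_len_strict_mono[OF assms(1)]]
      load_of_queue_bounds[OF assms(1) q] assms by force
qed

lemma load_of_queue_strict_mono:
  assumes Lr: "0 < Lr"
  shows "strict_mono_on {0<..} (load_of_queue Lr)"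
proof (rule monotone_on_cancel_strict_mono[OF queue_len_strict_mono[OF Lr]])
  show "load_of_queue Lr ` {0<..} \<subseteq> {0..<Lr}"
    using load_of_queue_bounds[OF Lr] by (fastforce intro: less_imp_le)
  show "strict_mono_on {0<..} (\<lambda>q. queue_len Lr (load_of_queue Lr q))"
    using queue_len_load_of_queue[OF Lr] by (simp add: monotone_on_def)
qed

lemma queue_slope_strict_mono: "0 < Lr \<Longrightarrow> strict_mono_on {0..<Lr} (queue_slope Lr)"
proof (rule strict_mono_onI)
  fix x y assume Lr: "0 < Lr" and xy: "x \<in> {0..<Lr}" "y \<in> {0..<Lr}" "x < y"
  then have "(Lr - y)\<^sup>2 < (Lr - x)\<^sup>2" by (intro power_strict_mono) auto
  then show "queue_slope Lr x < queue_slope Lr y"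
    unfolding queue_slope_def using Lr xy by (simp add: divide_strict_left_mono)
qed

lemma queue_slope_pos:
  assumes "0 < Lr" "0 < x" "x < Lr"
  shows "0 < queue_slope Lr x"
  using strict_mono_onD[OF queue_slope_strict_mono, of Lr 0 x] assms
  by (simp add: queue_slope_def power2_eq_square)

lemma slope_of_queue_pos: "0 < Lr \<Longrightarrow> 0 < q \<Longrightarrow> 0 < slope_of_queue Lr q"
  unfolding slope_of_queue_def using load_of_queue_bounds queue_slope_pos by blast

lemma slope_of_queue_strict_mono: "0 < Lr \<Longrightarrow> strict_mono_on {0<..} (slope_of_queue Lr)"
  unfolding slope_of_queue_def
  using strict_mono_onD[OF queue_slope_strict_mono] strict_mono_onD[OF load_of_queue_strict_mono]
    load_of_queue_bounds
  by (intro strict_mono_onI) (auto simp: less_imp_le)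

locale service_class =
  fixes J a b c d :: real
  assumes J_pos: "0 < J" and a_pos: "0 < a" and b_pos: "0 < b" and c_pos: "0 < c" and d_pos: "0 < d"
begin

definition dim_balance :: "real \<Rightarrow> real" where
  "dim_balance k = k * (c * k + d * J) / (J * (a * k + b * J))"

definition ratio_balance :: "real \<Rightarrow> real" where
  "ratio_balance r = r * (r - 1) * (b + d * ln (r / (r - 1))) / (a * r + c)"

definition dim_balance_inv :: "real \<Rightarrow> real" where
  "dim_balance_inv y = (y * J * a - d * J + sqrt ((y * J * a - d * J)\<^sup>2 + 4 * c * y * J\<^sup>2 * b)) / (2 * c)"

definition dim_of_ratio :: "real \<Rightarrow> real" where
  "dim_of_ratio r = dim_balance_inv (ratio_balance r)"

definition dim_slope :: "real \<Rightarrow> real" where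
  "dim_slope k = (c * k + d * J) / (k * (a * k + b * J))"

definition slope_of_ratio :: "real \<Rightarrow> real" where
  "slope_of_ratio r = dim_slope (dim_of_ratio r) / (r * (r - 1))"

lemmas params_pos = J_pos a_pos b_pos c_pos d_pos

lemma dU_dk_pos: "0 < r \<Longrightarrow> 0 < a * r + c"
  using a_pos c_pos by (simp add: add_pos_pos)

lemma dU_dr_pos: "0 < k \<Longrightarrow> 0 < a * k + b * J"
  using params_pos by (simp add: add_pos_pos)

lemma dim_balance_pos: "0 < k \<Longrightarrow> 0 < dim_balance k"
  unfolding dim_balance_def using params_pos by (intro divide_pos_pos mult_pos_pos add_pos_pos) auto

lemma dim_balance_strict_mono: "strict_mono_on {0<..} dim_balance"
proof (rule strict_mono_onI)
  fix x y :: real assume "x \<in> {0<..}" "y \<in> {0<..}" "x < y"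
  then have x: "0 < x" "x < y" by auto
  have "y * (c * y + d * J) * (a * x + b * J) - x * (c * x + d * J) * (a * y + b * J)
      = a * c * x * y * (y - x) + b * c * J * (y * y - x * x) + b * d * J * J * (y - x)"
    by (simp add: algebra_simps)
  moreover have "0 < a * c * x * y * (y - x)" "0 < b * d * J * J * (y - x)"
    using params_pos x by simp_all
  moreover have "0 < b * c * J * (y * y - x * x)" using params_pos x by (simp add: mult_strict_mono)
  ultimately have "x * (c * x + d * J) * (a * y + b * J) < y * (c * y + d * J) * (a * x + b * J)"
    by linarith
  moreover have "0 < a * x + b * J" "0 < a * y + b * J" using dU_dr_pos x by simp_all
  ultimately show "dim_balance x < dim_balance y"
    unfolding dim_balance_def using params_pos by (simp add: divide_simps mult_ac)
qed

lemma dim_balance_inv_pos: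
  assumes "0 < y"
  shows "0 < dim_balance_inv y"
proof -
  let ?B = "y * J * a - d * J"
  have "sqrt (?B\<^sup>2) < sqrt (?B\<^sup>2 + 4 * c * y * J\<^sup>2 * b)"
    using params_pos assms by (intro real_sqrt_less_mono) simp
  then have "0 < ?B + sqrt (?B\<^sup>2 + 4 * c * y * J\<^sup>2 * b)" by simp
  then show ?thesis unfolding dim_balance_inv_def using c_pos by simp
qed

text \<open>The inverse is the positive root of the quadratic \<open>c k\<^sup>2 + (d J - y J a) k - y J\<^sup>2 b = 0\<close>.\<close>
lemma dim_balance_dim_balance_inv:
  assumes y: "0 < y"
  shows "dim_balance (dim_balance_inv y) = y"
proof -
  let ?B = "y * J * a - d * J"
  define S where "S = sqrt (?B\<^sup>2 + 4 * c * y * J\<^sup>2 * b)"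
  define x where "x = dim_balance_inv y"
  have S2: "S\<^sup>2 = ?B\<^sup>2 + 4 * c * y * J\<^sup>2 * b"
    unfolding S_def using params_pos y by simp
  have "S = 2 * c * x - ?B" unfolding x_def dim_balance_inv_def S_def using c_pos by simp
  then have "(2 * c * x - ?B)\<^sup>2 = ?B\<^sup>2 + 4 * c * y * J\<^sup>2 * b" using S2 by simp
  then have "4 * c * (c * x * x + (d * J - y * J * a) * x - y * J * J * b) = 0"
    by (simp add: power2_eq_square algebra_simps)
  then have "c * x * x + (d * J - y * J * a) * x - y * J * J * b = 0" using c_pos by simp
  then have "x * (c * x + d * J) = y * (J * (a * x + b * J))" by (simp add: algebra_simps)
  moreover have "0 < a * x + b * J" using dU_dr_pos dim_balance_inv_pos[OF y] x_def by simp
  ultimately show ?thesis unfolding dim_balance_def x_def[symmetric] using J_pos by (simp add: divide_simps)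
qed

lemma dim_balance_inv_strict_mono: "strict_mono_on {0<..} dim_balance_inv"
  by (rule monotone_on_cancel_strict_mono[OF dim_balance_strict_mono])
    (auto simp: dim_balance_inv_pos dim_balance_dim_balance_inv monotone_on_def)

lemma dim_balance_inv_dim_balance:
  assumes "0 < k"
  shows "dim_balance_inv (dim_balance k) = k"
  using strict_mono_on_eqD[OF dim_balance_strict_mono]
    dim_balance_dim_balance_inv dim_balance_pos dim_balance_inv_pos assms
  by (metis greaterThan_iff)

lemma continuous_on_dim_balance_inv: "continuous_on UNIV dim_balance_inv"
  unfolding dim_balance_inv_def using c_pos by (intro continuous_intros) auto

lemma ratio_balance_pos: "1 < r \<Longrightarrow> 0 < ratio_balance r"
proof -
  assume r: "1 < r"
  then have "0 < ln (r / (r - 1))" by simp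
  then show ?thesis unfolding ratio_balance_def using params_pos r
    by (intro divide_pos_pos mult_pos_pos add_pos_pos) auto
qed

lemma ratio_balance_deriv:
  assumes r: "1 < r"
  shows "(ratio_balance has_real_derivative
     ((b + d * ln (r / (r - 1))) * (a * r * r + c * (2 * r - 1)) - d * (a * r + c)) / (a * r + c)\<^sup>2) (at r)"
proof -
  have "0 < a * r + c" using dU_dk_pos r by simp
  then have nz: "a * r + c \<noteq> 0" "r - 1 \<noteq> 0" "r \<noteq> 0" "0 < r / (r - 1)" using r by auto
  have "r + r * (r * r) - r * (r * 2) = r * (r - 1)\<^sup>2" by (simp add: power2_eq_square algebra_simps)
  then have nz2: "r + r * (r * r) - r * (r * 2) \<noteq> 0" using nz by simp
  have "((\<lambda>r. r * (r - 1) * (b + d * ln (r / (r - 1))) / (a * r + c)) has_real_derivative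
     (((2 * r - 1) * (b + d * ln (r / (r - 1))) - d) * (a * r + c)
       - r * (r - 1) * (b + d * ln (r / (r - 1))) * a) / (a * r + c)\<^sup>2) (at r)"
    apply (rule derivative_eq_intros refl | (use nz in \<open>simp; fail\<close>))+
    using nz apply (simp add: field_simps power2_eq_square)
    using nz2 apply (simp add: field_simps)
    done
  moreover have "((2 * r - 1) * (b + d * ln (r / (r - 1))) - d) * (a * r + c)
       - r * (r - 1) * (b + d * ln (r / (r - 1))) * a
     = (b + d * ln (r / (r - 1))) * (a * r * r + c * (2 * r - 1)) - d * (a * r + c)"
    by (simp add: algebra_simps)
  ultimately show ?thesis unfolding ratio_balance_def by simp
qed

lemma ratio_balance_deriv_pos:
  assumes r: "1 < r"
  shows "0 < ((b + d * ln (r / (r - 1))) * (a * r * r + c * (2 * r - 1)) - d * (a * r + c)) / (a * r + c)\<^sup>2"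
proof -
  let ?s = "ln (r / (r - 1))" and ?X = "a * r * r + c * (2 * r - 1)"
  have X: "0 < ?X" using params_pos r by (intro add_pos_pos) auto
  have arc: "0 < a * r + c" using dU_dk_pos r by simp
  have "(1 / r) * ?X \<le> ?s * ?X"
    using ln_ratio_ge[OF r] X by (intro mult_right_mono) auto
  moreover have "(1 / r) * ?X = a * r + c + c * (1 - 1 / r)" using r by (simp add: field_simps)
  moreover have "0 < c * (1 - 1 / r)" using c_pos r by simp
  ultimately have "0 < ?s * ?X - (a * r + c)" by linarith
  then have "0 < d * (?s * ?X - (a * r + c))" using d_pos by (rule mult_pos_pos[rotated])
  moreover have "0 < b * ?X" using b_pos X by (rule mult_pos_pos)
  ultimately have "0 < (b + d * ?s) * ?X - d * (a * r + c)" by (simp add: algebra_simps)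
  then show ?thesis using arc by simp
qed

lemma ratio_balance_strict_mono: "strict_mono_on {1<..} ratio_balance"
proof (rule strict_mono_onI)
  fix r1 r2 :: real assume r: "r1 \<in> {1<..}" "r1 < r2"
  show "ratio_balance r1 < ratio_balance r2"
  proof (rule DERIV_pos_imp_increasing[OF r(2)])
    fix x assume "r1 \<le> x"
    then have "1 < x" using r by simp
    then show "\<exists>y. (ratio_balance has_real_derivative y) (at x) \<and> 0 < y"
      using ratio_balance_deriv ratio_balance_deriv_pos by blast
  qed
qed

lemma dim_of_ratio_pos: "1 < r \<Longrightarrow> 0 < dim_of_ratio r"
  unfolding dim_of_ratio_def by (intro dim_balance_inv_pos ratio_balance_pos)

lemma dim_of_ratio_strict_mono: "strict_mono_on {1<..} dim_of_ratio"
  unfolding dim_of_ratio_def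
  using strict_mono_onD[OF dim_balance_inv_strict_mono] strict_mono_onD[OF ratio_balance_strict_mono]
    ratio_balance_pos
  by (intro strict_mono_onI) auto

lemma continuous_on_dim_of_ratio: "continuous_on {1<..} dim_of_ratio"
proof -
  have "a * r + c \<noteq> 0" if "r \<in> {1<..}" for r
    using that dU_dk_pos[of r] by simp
  then have "continuous_on {1<..} ratio_balance"
    unfolding ratio_balance_def by (intro continuous_intros) auto
  then show ?thesis
    unfolding dim_of_ratio_def using continuous_on_compose2[OF continuous_on_dim_balance_inv] by blast
qed

lemma dim_slope_pos: "0 < k \<Longrightarrow> 0 < dim_slope k"
  unfolding dim_slope_def using params_pos by (intro divide_pos_pos mult_pos_pos add_pos_pos) auto

lemma dim_slope_strict_antimono: "strict_antimono_on {0<..} dim_slope"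
proof (rule monotone_onI)
  fix x y :: real assume "x \<in> {0<..}" "y \<in> {0<..}" "x < y"
  then have x: "0 < x" "x < y" by auto
  have "(c * x + d * J) * (y * (a * y + b * J)) - (c * y + d * J) * (x * (a * x + b * J))
      = a * c * x * y * (y - x) + a * d * J * (y * y - x * x) + b * d * J * J * (y - x)"
    by (simp add: algebra_simps)
  moreover have "0 < a * c * x * y * (y - x)" "0 < b * d * J * J * (y - x)"
    using params_pos x by simp_all
  moreover have "0 < a * d * J * (y * y - x * x)" using params_pos x by (simp add: mult_strict_mono)
  ultimately have "(c * y + d * J) * (x * (a * x + b * J)) < (c * x + d * J) * (y * (a * y + b * J))"
    by linarith
  moreover have "0 < a * x + b * J" "0 < a * y + b * J" using dU_dr_pos x by simp_all
  ultimately show "dim_slope y < dim_slope x"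
    unfolding dim_slope_def using x by (simp add: divide_simps)
qed

lemma continuous_on_dim_slope: "continuous_on {0<..} dim_slope"
proof -
  have "k * (a * k + b * J) \<noteq> 0" if "k \<in> {0<..}" for k
    using that dU_dr_pos by (simp add: order.strict_iff_order)
  then show ?thesis unfolding dim_slope_def by (intro continuous_intros) auto
qed

text \<open>A larger redundancy raises both the matched dimension and \<open>r (r - 1)\<close>.\<close>
lemma slope_of_ratio_strict_antimono: "strict_antimono_on {1<..} slope_of_ratio"
proof (rule monotone_onI)
  fix r1 r2 :: real assume "r1 \<in> {1<..}" "r2 \<in> {1<..}" "r1 < r2"
  then have r: "1 < r1" "r1 < r2" by auto
  have "dim_slope (dim_of_ratio r2) < dim_slope (dim_of_ratio r1)"
    using monotone_onD[OF dim_slope_strict_antimono] strict_mono_onD[OF dim_of_ratio_strict_mono]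
      dim_of_ratio_pos r by auto
  then have "slope_of_ratio r2 < dim_slope (dim_of_ratio r1) / (r2 * (r2 - 1))"
    unfolding slope_of_ratio_def using r by (intro divide_strict_right_mono) auto
  also have "\<dots> < slope_of_ratio r1"
    unfolding slope_of_ratio_def using r dim_slope_pos dim_of_ratio_pos
    by (intro divide_strict_left_mono mult_strict_mono) auto
  finally show "slope_of_ratio r2 < slope_of_ratio r1" .
qed

lemma continuous_on_slope_of_ratio: "continuous_on {1<..} slope_of_ratio"
  unfolding slope_of_ratio_def
  using continuous_on_compose2[OF continuous_on_dim_slope continuous_on_dim_of_ratio] dim_of_ratio_pos
  by (intro continuous_intros) auto

lemma slope_of_ratio_exceeds:
  assumes y: "0 < y"
  shows "\<exists>r. 1 < r \<and> r < 2 \<and> y < slope_of_ratio r"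
proof -
  define H where "H = dim_slope (dim_of_ratio 2)"
  have H: "0 < H" unfolding H_def by (simp add: dim_slope_pos dim_of_ratio_pos)
  define r where "r = 1 + min (1 / 2) (H / (4 * y))"
  have r: "1 < r" "r < 2" using H y unfolding r_def by auto
  have "dim_of_ratio r < dim_of_ratio 2"
    using strict_mono_onD[OF dim_of_ratio_strict_mono] r by simp
  then have "H < dim_slope (dim_of_ratio r)"
    unfolding H_def using monotone_onD[OF dim_slope_strict_antimono] dim_of_ratio_pos r by simp
  moreover have "r * (r - 1) \<le> H / (2 * y)"
  proof -
    have "r * (r - 1) \<le> 2 * (r - 1)" using r by (intro mult_right_mono) auto
    also have "\<dots> \<le> H / (2 * y)" unfolding r_def by simp
    finally show ?thesis .
  qed
  then have "2 * y \<le> H / (r * (r - 1))"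
    using H y r by (simp add: divide_simps mult.commute)
  moreover have "H / (r * (r - 1)) < dim_slope (dim_of_ratio r) / (r * (r - 1))"
    using calculation(1) r by (intro divide_strict_right_mono) auto
  ultimately have "2 * y < slope_of_ratio r" unfolding slope_of_ratio_def by linarith
  then show ?thesis using r y by auto
qed

lemma slope_of_ratio_below:
  assumes y: "0 < y"
  shows "\<exists>r. 2 < r \<and> slope_of_ratio r < y"
proof -
  define H where "H = dim_slope (dim_of_ratio 2)"
  have H: "0 < H" unfolding H_def by (simp add: dim_slope_pos dim_of_ratio_pos)
  define r where "r = 2 + H / y"
  have r: "2 < r" unfolding r_def using H y by simp
  have "dim_of_ratio 2 < dim_of_ratio r"
    using strict_mono_onD[OF dim_of_ratio_strict_mono] r by simp
  then have "dim_slope (dim_of_ratio r) < H"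
    unfolding H_def using monotone_onD[OF dim_slope_strict_antimono] dim_of_ratio_pos by simp
  moreover have "H / y < r * (r - 1)"
  proof -
    have "H / y < r - 1" unfolding r_def by simp
    also have "\<dots> < r * (r - 1)" using r by simp
    finally show ?thesis .
  qed
  then have "H / (r * (r - 1)) < y"
    using H y r by (simp add: divide_simps mult.commute)
  moreover have "slope_of_ratio r < H / (r * (r - 1))"
    unfolding slope_of_ratio_def using calculation(1) r by (intro divide_strict_right_mono) auto
  ultimately have "slope_of_ratio r < y" by linarith
  then show ?thesis using r by auto
qed

lemma slope_of_ratio_surj:
  assumes "0 < y"
  shows "\<exists>r>1. slope_of_ratio r = y"
proof -
  obtain r1 where r1: "1 < r1" "r1 < 2" "y < slope_of_ratio r1"
    using slope_of_ratio_exceeds[OF assms] by blast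
  obtain r2 where r2: "2 < r2" "slope_of_ratio r2 < y"
    using slope_of_ratio_below[OF assms] by blast
  have "continuous_on {r1..r2} slope_of_ratio"
    using r1 by (intro continuous_on_subset[OF continuous_on_slope_of_ratio]) auto
  then obtain r where "r1 \<le> r" "slope_of_ratio r = y"
    using IVT2'[of slope_of_ratio r2 y r1] r1 r2 by auto
  then show ?thesis using r1 by (intro exI[of _ r]) auto
qed

text \<open>The two stationarity conditions of the optimisation problem: eliminating the queue slope \<open>t\<close>
  between them gives \<open>dim_balance k = ratio_balance r\<close>.\<close>
lemma stationary_conditions_solve:
  assumes k: "0 < k" and r: "1 < r"
    and dk: "(a * r + c) * t = J * (b + d * ln (r / (r - 1))) / k\<^sup>2"
    and dr: "(a * k + b * J) * t = (c + d * J / k) / (r * (r - 1))"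
  shows "dim_of_ratio r = k" "slope_of_ratio r = t"
proof -
  have akb: "0 < a * k + b * J" using dU_dr_pos[OF k] .
  have arc: "0 < a * r + c" using dU_dk_pos r by simp
  have w: "0 < r * (r - 1)" using r by simp
  have "t = (c + d * J / k) / (r * (r - 1)) / (a * k + b * J)"
    unfolding dr[symmetric] using akb by simp
  also have "\<dots> = dim_slope k / (r * (r - 1))"
    unfolding dim_slope_def using k akb w by (simp add: divide_simps)
  finally have t: "t = dim_slope k / (r * (r - 1))" .
  let ?B = "b + d * ln (r / (r - 1))"
  have "(a * r + c) * (c * k + d * J) / (k * (a * k + b * J) * (r * (r - 1))) = J * ?B / k\<^sup>2"
    using dk unfolding t dim_slope_def by simp
  then have "(a * r + c) * (c * k + d * J) * k\<^sup>2 = J * ?B * (k * (a * k + b * J) * (r * (r - 1)))"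
    using k akb w by (subst (asm) frac_eq_eq) auto
  then have "((a * r + c) * (c * k + d * J) * k) * k = (J * ?B * ((a * k + b * J) * (r * (r - 1)))) * k"
    by (simp add: power2_eq_square ac_simps)
  then have "k * (c * k + d * J) * (a * r + c) = r * (r - 1) * ?B * (J * (a * k + b * J))"
    using k by (simp add: ac_simps)
  then have "dim_balance k = ratio_balance r"
    unfolding dim_balance_def ratio_balance_def using akb arc J_pos by (simp add: frac_eq_eq)
  then show "dim_of_ratio r = k"
    unfolding dim_of_ratio_def using dim_balance_inv_dim_balance[OF k] by simp
  then show "slope_of_ratio r = t" unfolding slope_of_ratio_def t by simp
qed

definition opt_ratio :: "real \<Rightarrow> real \<Rightarrow> real" where
  "opt_ratio Lr q = (THE r. 1 < r \<and> slope_of_ratio r = slope_of_queue Lr q)"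

definition opt_dim :: "real \<Rightarrow> real \<Rightarrow> real" where
  "opt_dim Lr q = dim_of_ratio (opt_ratio Lr q)"

definition opt_length :: "real \<Rightarrow> real \<Rightarrow> real" where
  "opt_length Lr q = opt_dim Lr q * opt_ratio Lr q"

lemma slope_of_ratio_inj: "inj_on slope_of_ratio {1<..}"
proof (rule inj_onI)
  fix r r' assume r: "r \<in> {1<..}" "r' \<in> {1<..}" and eq: "slope_of_ratio r = slope_of_ratio r'"
  show "r = r'"
  proof (rule linorder_cases[of r r'])
    assume "r < r'"
    then show ?thesis using monotone_onD[OF slope_of_ratio_strict_antimono r] eq by simp
  next
    assume "r' < r"
    then show ?thesis using monotone_onD[OF slope_of_ratio_strict_antimono r(2,1)] eq by simp
  qed
qed

lemma opt_ratio_spec: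
  assumes "0 < Lr" "0 < q"
  shows "1 < opt_ratio Lr q \<and> slope_of_ratio (opt_ratio Lr q) = slope_of_queue Lr q"
proof -
  let ?P = "\<lambda>r. 1 < r \<and> slope_of_ratio r = slope_of_queue Lr q"
  obtain r where r: "?P r"
    using slope_of_ratio_surj[OF slope_of_queue_pos[OF assms]] by blast
  have "r' = r" if "?P r'" for r'
    using that r inj_onD[OF slope_of_ratio_inj, of r' r] by simp
  then show ?thesis unfolding opt_ratio_def using theI[of ?P r] r by blast
qed

lemma opt_ratio_eqI:
  assumes "0 < Lr" "0 < q" "1 < r" "slope_of_ratio r = slope_of_queue Lr q"
  shows "opt_ratio Lr q = r"
  using opt_ratio_spec[OF assms(1,2)] assms(3,4) inj_onD[OF slope_of_ratio_inj, of "opt_ratio Lr q" r]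
  by simp

lemma opt_ratio_gt_1: "0 < Lr \<Longrightarrow> 0 < q \<Longrightarrow> 1 < opt_ratio Lr q"
  using opt_ratio_spec by blast

lemma opt_ratio_strict_antimono:
  assumes Lr: "0 < Lr"
  shows "strict_antimono_on {0<..} (opt_ratio Lr)"
proof -
  have "strict_mono_on {1<..} (\<lambda>r. - slope_of_ratio r)"
    using slope_of_ratio_strict_antimono by (simp add: monotone_on_def)
  then have "monotone_on {0<..} (\<lambda>x y. y < x) (<) (opt_ratio Lr)"
  proof (rule monotone_on_cancel_strict_mono)
    show "opt_ratio Lr ` {0<..} \<subseteq> {1<..}" using opt_ratio_gt_1[OF Lr] by auto
    show "monotone_on {0<..} (\<lambda>x y. y < x) (<) (\<lambda>q. - slope_of_ratio (opt_ratio Lr q))"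
      using opt_ratio_spec[OF Lr] strict_mono_onD[OF slope_of_queue_strict_mono[OF Lr]]
      by (simp add: monotone_on_def)
  qed
  then show ?thesis by (simp add: monotone_on_def)
qed

lemma opt_dim_strict_antimono:
  assumes Lr: "0 < Lr"
  shows "strict_antimono_on {0<..} (opt_dim Lr)"
proof (rule monotone_onI)
  fix q q' :: real assume q: "q \<in> {0<..}" "q' \<in> {0<..}" "q < q'"
  then have "opt_ratio Lr q' < opt_ratio Lr q" "1 < opt_ratio Lr q'"
    using monotone_onD[OF opt_ratio_strict_antimono[OF Lr]] opt_ratio_gt_1[OF Lr] by auto
  then show "opt_dim Lr q' < opt_dim Lr q"
    unfolding opt_dim_def using strict_mono_onD[OF dim_of_ratio_strict_mono] by simp
qed

lemma opt_length_strict_antimono: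
  assumes Lr: "0 < Lr"
  shows "strict_antimono_on {0<..} (opt_length Lr)"
  unfolding opt_length_def
proof (rule strict_antimono_on_mult[OF opt_dim_strict_antimono[OF Lr] opt_ratio_strict_antimono[OF Lr]])
  fix q :: real assume "q \<in> {0<..}"
  then have "1 < opt_ratio Lr q" using opt_ratio_gt_1[OF Lr] by simp
  then show "0 < opt_dim Lr q" "0 < opt_ratio Lr q"
    unfolding opt_dim_def using dim_of_ratio_pos by auto
qed

lemma opt_functions_strictly_decreasing:
  "0 < Lr \<Longrightarrow> strictly_decreasing_pos (opt_length Lr) \<and> strictly_decreasing_pos (opt_dim Lr)
    \<and> strictly_decreasing_pos (opt_ratio Lr)"
  unfolding strictly_decreasing_pos_iff
  by (simp add: opt_length_strict_antimono opt_dim_strict_antimono opt_ratio_strict_antimono)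

end

lemma sum_lessThan_update:
  fixes F G :: "nat \<Rightarrow> 'a::ab_group_add"
  assumes "i < m" "\<And>j. j \<noteq> i \<Longrightarrow> F j = G j"
  shows "(\<Sum>j<m. F j) = (\<Sum>j<m. G j) + (F i - G i)"
proof -
  have "(\<Sum>j\<in>{..<m} - {i}. F j) = (\<Sum>j\<in>{..<m} - {i}. G j)" using assms(2) by (intro sum.cong) auto
  then show ?thesis using assms(1) by (simp add: sum.remove)
qed

lemma Lam_update:
  assumes "i < m" "\<And>j. j \<noteq> i \<Longrightarrow> k' j = k j \<and> r' j = r j"
  shows "Lam m lam p J a b c d k' r'
    = Lam m lam p J a b c d k r + lam * p i * (U J a b c d k' r' i - U J a b c d k r i)"
proof -
  have "(\<Sum>j<m. p j * U J a b c d k' r' j)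
      = (\<Sum>j<m. p j * U J a b c d k r j) + (p i * U J a b c d k' r' i - p i * U J a b c d k r i)"
    using assms by (intro sum_lessThan_update) (simp_all add: U_def)
  then show ?thesis unfolding Lam_def by (simp only:) (simp add: algebra_simps)
qed

lemma objective_update:
  assumes "i < m" "\<And>j. j \<noteq> i \<Longrightarrow> k' j = k j \<and> r' j = r j"
  shows "objective m L lam p J a b c d k' r'
    = queue_len (real L) (Lam m lam p J a b c d k' r') / lam
      + (\<Sum>j<m. p j * Ds J a b c d k r j) + p i * (Ds J a b c d k' r' i - Ds J a b c d k r i)"
proof -
  have "(\<Sum>j<m. p j * Ds J a b c d k' r' j)
      = (\<Sum>j<m. p j * Ds J a b c d k r j) + (p i * Ds J a b c d k' r' i - p i * Ds J a b c d k r i)"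
    using assms by (intro sum_lessThan_update) (simp_all add: Ds_def)
  then show ?thesis unfolding objective_def Dq_def queue_len_def by (simp only:) (simp add: algebra_simps)
qed

text \<open>A first-order condition: along a feasible line through the optimum on which \<open>U i\<close> is affine,
  the objective is \<open>queue_len\<close> of an affine function plus \<open>p i * Ds i\<close>, and has an interior
  minimum at \<open>x\<close>.\<close>
lemma optimal_imp_stationary:
  fixes L :: nat and K R :: "real \<Rightarrow> nat \<Rightarrow> real"
  assumes opt: "optimal m L lam p J a b c d k r"
    and L: "0 < L" and lam: "0 < lam" and i: "i < m" "0 < p i"
    and x: "lo < x" "K x = k" "R x = r"
    and off_i: "\<And>y j. j \<noteq> i \<Longrightarrow> K y j = k j \<and> R y j = r j"
    and feas: "\<And>y j. lo < y \<Longrightarrow> j < m \<Longrightarrow> 0 < K y j \<and> 1 < R y j"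
    and lin: "\<And>y. U J a b c d (K y) (R y) i = U J a b c d k r i + g * (y - x)" and g: "0 < g"
    and deriv: "((\<lambda>y. Ds J a b c d (K y) (R y) i) has_real_derivative D') (at x)"
  shows "g * queue_slope (real L) (Lam m lam p J a b c d k r) + D' = 0"
proof -
  define \<Lambda> where "\<Lambda> = Lam m lam p J a b c d k r"
  define al where "al = lam * p i * g"
  have al: "0 < al" unfolding al_def using lam i g by simp
  have \<Lambda>L: "\<Lambda> < real L" using opt unfolding \<Lambda>_def optimal_def feasible_def by blast
  have Lam_line: "Lam m lam p J a b c d (K y) (R y) = \<Lambda> + al * (y - x)" for y
    using Lam_update[of i m "K y" k "R y" r] i(1) off_i lin unfolding \<Lambda>_def al_def by simp
  define f where "f y = queue_len (real L) (\<Lambda> + al * (y - x)) / lam + p i * Ds J a b c d (K y) (R y) i" for y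
  have obj: "objective m L lam p J a b c d (K y) (R y)
      = f y + (\<Sum>j<m. p j * Ds J a b c d k r j) - p i * Ds J a b c d k r i" for y
    using objective_update[of i m "K y" k "R y" r] i(1) off_i
    unfolding f_def by (simp add: Lam_line right_diff_distrib)
  have line: "((\<lambda>y. \<Lambda> + al * (y - x)) has_real_derivative al) (at x)"
    by (rule derivative_eq_intros refl)+ simp
  have "((\<lambda>y. queue_len (real L) (\<Lambda> + al * (y - x))) has_real_derivative
      queue_slope (real L) \<Lambda> * al) (at x)"
    using DERIV_chain2[OF _ line, of "queue_len (real L)"] queue_len_deriv[OF _ \<Lambda>L] L by simp
  then have df: "(f has_real_derivative queue_slope (real L) \<Lambda> * al / lam + p i * D') (at x)"
    unfolding f_def by (intro DERIV_add DERIV_cdivide DERIV_cmult deriv)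
  have min: "f x \<le> f y" if "lo < y" "y < x + (real L - \<Lambda>) / al" for y
  proof -
    have "\<Lambda> + al * (y - x) < real L" using that al by (simp add: field_simps)
    then have "feasible m L lam p J a b c d (K y) (R y)"
      unfolding feasible_def Lam_line using feas that(1) by blast
    then have "objective m L lam p J a b c d k r \<le> objective m L lam p J a b c d (K y) (R y)"
      using opt unfolding optimal_def by blast
    then show ?thesis using obj[of y] obj[of x] x by simp
  qed
  have "x < x + (real L - \<Lambda>) / al" using \<Lambda>L al by simp
  then have "queue_slope (real L) \<Lambda> * al / lam + p i * D' = 0"
    using DERIV_interior_min_eq_0[OF df x(1)] min by blast
  then have "p i * (g * queue_slope (real L) \<Lambda> + D') = 0"
    unfolding al_def using lam by (simp add: algebra_simps)
  then show ?thesis using i(2) unfolding \<Lambda>_def by simp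
qed

lemma optimal_feasible_vars:
  "optimal m L lam p J a b c d k r \<Longrightarrow> j < m \<Longrightarrow> 0 < k j \<and> 1 < r j"
  unfolding optimal_def feasible_def by blast

lemma optimal_stationary_dim:
  fixes L :: nat
  assumes opt: "optimal m L lam p J a b c d k r"
    and L: "0 < L" and lam: "0 < lam" and i: "i < m" "0 < p i" and pos: "0 < a i" "0 < c i"
  shows "(a i * r i + c i) * queue_slope (real L) (Lam m lam p J a b c d k r)
    = J i * (b i + d i * ln (r i / (r i - 1))) / (k i)\<^sup>2"
proof -
  have kr: "0 < k i" "1 < r i" using optimal_feasible_vars[OF opt i(1)] by auto
  have "((\<lambda>y. Ds J a b c d (k(i := y)) r i) has_real_derivative
      - (J i * (b i + d i * ln (r i / (r i - 1)))) / (k i)\<^sup>2) (at (k i))"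
    unfolding Ds_def using kr
    by (auto intro!: derivative_eq_intros simp: field_simps power2_eq_square)
  moreover have "0 < a i * r i + c i" using pos kr by (simp add: add_pos_pos)
  ultimately have "(a i * r i + c i) * queue_slope (real L) (Lam m lam p J a b c d k r)
      + - (J i * (b i + d i * ln (r i / (r i - 1)))) / (k i)\<^sup>2 = 0"
    using optimal_feasible_vars[OF opt] kr
    by (intro optimal_imp_stationary[OF opt L lam i, where lo = 0 and x = "k i"
          and K = "\<lambda>y. k(i := y)" and R = "\<lambda>_. r"]) (auto simp: U_def algebra_simps)
  then show ?thesis by simp
qed

lemma optimal_stationary_ratio:
  fixes L :: nat
  assumes opt: "optimal m L lam p J a b c d k r"
    and L: "0 < L" and lam: "0 < lam" and i: "i < m" "0 < p i" and pos: "0 < a i" "0 < b i" "0 < J i"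
  shows "(a i * k i + b i * J i) * queue_slope (real L) (Lam m lam p J a b c d k r)
    = (c i + d i * J i / k i) / (r i * (r i - 1))"
proof -
  have kr: "0 < k i" "1 < r i" using optimal_feasible_vars[OF opt i(1)] by auto
  have nz: "r i - 1 \<noteq> 0" "r i \<noteq> 0" "0 < r i / (r i - 1)" using kr by auto
  have "((\<lambda>y. Ds J a b c d k (r(i := y)) i) has_real_derivative
      - ((c i + d i * J i / k i) / (r i * (r i - 1)))) (at (r i))"
    unfolding Ds_def fun_upd_same
    by (rule derivative_eq_intros refl | (use nz in \<open>simp; fail\<close>))+
  moreover have "0 < a i * k i + b i * J i" using pos kr by (simp add: add_pos_pos)
  ultimately have "(a i * k i + b i * J i) * queue_slope (real L) (Lam m lam p J a b c d k r)
      + - ((c i + d i * J i / k i) / (r i * (r i - 1))) = 0"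
    using optimal_feasible_vars[OF opt] kr
    by (intro optimal_imp_stationary[OF opt L lam i, where lo = 1 and x = "r i"
          and K = "\<lambda>_. k" and R = "\<lambda>y. r(i := y)"]) (auto simp: U_def algebra_simps)
  then show ?thesis by simp
qed

lemma optimal_Lam_pos:
  assumes opt: "optimal m L lam p J a b c d k r" and "0 < m" "0 < lam"
    and par: "\<forall>i<m. 0 < J i \<and> 0 < a i \<and> 0 < b i \<and> 0 < c i \<and> 0 < d i" and "\<forall>i<m. 0 < p i"
  shows "0 < Lam m lam p J a b c d k r"
proof -
  have "0 < p j * U J a b c d k r j" if "j < m" for j
    using that assms optimal_feasible_vars[OF opt that] unfolding U_def
    by (intro mult_pos_pos add_pos_pos) auto
  then have "0 < (\<Sum>j<m. p j * U J a b c d k r j)" using \<open>0 < m\<close> by (intro sum_pos) auto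
  then show ?thesis unfolding Lam_def using \<open>0 < lam\<close> by simp
qed

lemma optimal_solution_via_queue_length:
  fixes L :: nat
  assumes opt: "optimal m L lam p J a b c d k r" and L: "0 < L" and lam: "0 < lam"
    and par: "\<forall>i<m. 0 < J i \<and> 0 < a i \<and> 0 < b i \<and> 0 < c i \<and> 0 < d i" and p: "\<forall>i<m. 0 < p i"
    and i: "i < m"
  defines "Q \<equiv> queue_len (real L) (Lam m lam p J a b c d k r)"
  shows "k i * r i = service_class.opt_length (J i) (a i) (b i) (c i) (d i) (real L) Q"
    and "k i = service_class.opt_dim (J i) (a i) (b i) (c i) (d i) (real L) Q"
    and "r i = service_class.opt_ratio (J i) (a i) (b i) (c i) (d i) (real L) Q"
proof -
  interpret service_class "J i" "a i" "b i" "c i" "d i" using par i by unfold_locales auto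
  define \<Lambda> where "\<Lambda> = Lam m lam p J a b c d k r"
  have \<Lambda>: "0 < \<Lambda>" "\<Lambda> < real L"
    using optimal_Lam_pos[OF opt _ lam par p] i opt unfolding \<Lambda>_def optimal_def feasible_def by auto
  have kr: "0 < k i" "1 < r i" using optimal_feasible_vars[OF opt i] by auto
  have Q: "0 < Q" unfolding Q_def \<Lambda>_def[symmetric] queue_len_def using \<Lambda> by simp
  have "slope_of_queue (real L) Q = queue_slope (real L) \<Lambda>"
    unfolding slope_of_queue_def Q_def \<Lambda>_def[symmetric] using load_of_queue_queue_len \<Lambda> L by simp
  moreover have "dim_of_ratio (r i) = k i" "slope_of_ratio (r i) = queue_slope (real L) \<Lambda>"
    using stationary_conditions_solve[OF kr
        optimal_stationary_dim[OF opt L lam i _ a_pos c_pos]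
        optimal_stationary_ratio[OF opt L lam i _ a_pos b_pos J_pos]] p i
    unfolding \<Lambda>_def by auto
  ultimately have "opt_ratio (real L) Q = r i" using opt_ratio_eqI L Q kr by simp
  then show "k i * r i = opt_length (real L) Q" "k i = opt_dim (real L) Q" "r i = opt_ratio (real L) Q"
    unfolding opt_length_def opt_dim_def using \<open>dim_of_ratio (r i) = k i\<close> by simp_all
qed

theorem corollary1:
  fixes L :: nat
  assumes "L > 0"
  shows "\<exists>NF KF RF :: real \<Rightarrow> real \<Rightarrow> real \<Rightarrow> real \<Rightarrow> real \<Rightarrow> real \<Rightarrow> real.
     (\<forall>Ji ai bi ci di. Ji > 0 \<and> ai > 0 \<and> bi > 0 \<and> ci > 0 \<and> di > 0 \<longrightarrow>
        strictly_decreasing_pos (NF Ji ai bi ci di) \<and>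
        strictly_decreasing_pos (KF Ji ai bi ci di) \<and>
        strictly_decreasing_pos (RF Ji ai bi ci di)) \<and>
     (\<forall>(m::nat) J a b c d (lam::real) p k r.
        m \<ge> 1 \<longrightarrow>
        (\<forall>i<m. J i > 0 \<and> a i > 0 \<and> b i > 0 \<and> c i > 0 \<and> d i > 0) \<longrightarrow>
        lam > 0 \<longrightarrow> (\<forall>i<m. p i > 0) \<longrightarrow> (\<Sum>i<m. p i) = 1 \<longrightarrow>
        optimal m L lam p J a b c d k r \<longrightarrow>
        (\<forall>k' r'. optimal m L lam p J a b c d k' r' \<longrightarrow> (\<forall>i<m. k' i = k i \<and> r' i = r i)) \<longrightarrow>
        (let \<Lambda> = Lam m lam p J a b c d k r;
             Q = \<Lambda>\<^sup>2 / (real L * (real L - \<Lambda>))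
         in \<forall>i<m. k i * r i = NF (J i) (a i) (b i) (c i) (d i) Q \<and>
                  k i = KF (J i) (a i) (b i) (c i) (d i) Q \<and>
                  r i = RF (J i) (a i) (b i) (c i) (d i) Q))"
proof (rule exI[of _ "\<lambda>J a b c d. service_class.opt_length J a b c d (real L)"],
    rule exI[of _ "\<lambda>J a b c d. service_class.opt_dim J a b c d (real L)"],
    rule exI[of _ "\<lambda>J a b c d. service_class.opt_ratio J a b c d (real L)"], rule conjI, goal_cases)
  case 1
  have "0 < real L" using assms by simp
  then show ?case
    using service_class.opt_functions_strictly_decreasing[OF service_class.intro] by simp
next
  case 2
  show ?case
    unfolding Let_def queue_len_def[symmetric]
    by (intro allI impI conjI; rule optimal_solution_via_queue_length[OF _ assms]) auto
qed

end
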